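(* Let $\mathsf{B}$ be a partition of $\mathcal{P}([n])$ into branches of the form $\mathcal{B}=\mathcal{C}(I,E)$ with $I,E\subseteq[n]$ disjoint, and suppose for each $\mathcal{B}\in\mathsf{B}$ real numbers $\underline{v}_{\mathcal{B}}\le\overline{v}_{\mathcal{B}}$ satisfy $\underline{v}_{\mathcal{B}}\le v(S)\le\overline{v}_{\mathcal{B}}$ for all $S\in\mathcal{B}$. For $i\in[n]$ let $\mathsf{B}_{+i}:=\{\mathcal{C}(I,E)\in\mathsf{B}: i\in I\}$, $\mathsf{B}_{-i}:=\{\mathcal{C}(I,E)\in\mathsf{B}: i\in E\}$, and $\mathsf{B}_{\pm i}:=\mathsf{B}\setminus(\mathsf{B}_{+i}\cup\mathsf{B}_{-i})$. For $\mathcal{B}=\mathcal{C}(I,E)$ with $r:=|I|$, $s:=|I|+|E|$, put $\Lambda_{\mathcal{B}}:=\frac{1}{(s+1)\binom{s}{r}}$, $\Lambda^-_{\mathcal{B}}:=\Lambda_{\mathcal{B}}\frac{s+1}{r}$ (for $r\ge1$) and $\Lambda^+_{\mathcal{B}}:=\Lambda_{\mathcal{B}}\frac{s+1}{s-r}$ (for $s>r$). Then for every $i\in[n]$, $$\sum_{\mathcal{B}\in\mathsf{B}_{+i}}\Lambda^-_{\mathcal{B}}\underline{v}_{\mathcal{B}}+\sum_{\mathcal{B}\in\mathsf{B}_{\pm i}}\Lambda_{\mathcal{B}}(\underline{v}_{\mathcal{B}}-\overline{v}_{\mathcal{B}})-\sum_{\mathcal{B}\in\mathsf{B}_{-i}}\Lambda^+_{\mathcal{B}}\overline{v}_{\mathcal{B}}\;\le\;\varphi_i\;\le\;\sum_{\mathcal{B}\in\mathsf{B}_{+i}}\Lambda^-_{\mathcal{B}}\overline{v}_{\mathcal{B}}+\sum_{\mathcal{B}\in\mathsf{B}_{\pm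 i}}\Lambda_{\mathcal{B}}(\overline{v}_{\mathcal{B}}-\underline{v}_{\mathcal{B}})-\sum_{\mathcal{B}\in\mathsf{B}_{-i}}\Lambda^+_{\mathcal{B}}\underline{v}_{\mathcal{B}}.$$
   Context: Let $f:\mathbb{R}^n\to\mathbb{R}$, $\mathbf{x}\in\mathbb{R}^n$, $\mathcal{D}$ a distribution on $\mathbb{R}^n$, and $v(S):=\mathbb{E}_{\mathbf{z}\sim\mathcal{D}}[f(\mathbf{x}_S;\mathbf{z}_{\bar S})]$ for $S\subseteq[n]$, where $(\mathbf{x}_S;\mathbf{z}_{\bar S})_j=x_j$ if $j\in S$ and $z_j$ otherwise. $\omega(k):=\frac1n\binom{n-1}{k}^{-1}$, $\Delta_i(S):=v(S\cup\{i\})-v(S)$, $\varphi_i:=\sum_{S\subseteq[n]\setminus\{i\}}\omega(|S|)\Delta_i(S)$. For disjoint $I,E\subseteq[n]$, $\mathcal{C}(I,E):=\{S\subseteq[n]: I\subseteq S,\ E\cap S=\emptyset\}$. *)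

theory Defs
  imports "HOL-Analysis.Analysis" "HOL-Probability.Probability"
begin

text \<open>Coordinates are indexed by a finite type 'n, so [n] = UNIV :: 'n set and n = CARD('n).\<close>

definition mix :: "real^'n \<Rightarrow> 'n set \<Rightarrow> real^'n \<Rightarrow> real^'n" where
  "mix x S z = (\<chi> j. if j \<in> S then x $ j else z $ j)"

definition game_val :: "(real^'n \<Rightarrow> real) \<Rightarrow> real^'n \<Rightarrow> (real^'n) measure \<Rightarrow> 'n set \<Rightarrow> real" where
  "game_val f x D S = (\<integral>z. f (mix x S z) \<partial>D)"

definition shap_weight :: "nat \<Rightarrow> nat \<Rightarrow> real" where
  "shap_weight n k = 1 / (real n * real ((n - 1) choose k))"

definition shapley :: "('n::finite set \<Rightarrow> real) \<Rightarrow> 'n \<Rightarrow> real" where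
  "shapley v i = (\<Sum>S \<in> {S. S \<subseteq> UNIV - {i}}. shap_weight CARD('n) (card S) * (v (insert i S) - v S))"

definition branch :: "'n set \<Rightarrow> 'n set \<Rightarrow> 'n set set" where
  "branch I E = {S. I \<subseteq> S \<and> E \<inter> S = {}}"

definition Lam :: "'n set \<Rightarrow> 'n set \<Rightarrow> real" where
  "Lam I E = 1 / (real (card I + card E + 1) * real ((card I + card E) choose card I))"

definition Lam_minus :: "'n set \<Rightarrow> 'n set \<Rightarrow> real" where
  "Lam_minus I E = Lam I E * real (card I + card E + 1) / real (card I)"

definition Lam_plus :: "'n set \<Rightarrow> 'n set \<Rightarrow> real" where
  "Lam_plus I E = Lam I E * real (card I + card E + 1) / real (card E)"

end

(*
  Rewrite the Shapley value as a signed sum over all coalitions,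
  phi_i = sum_T (+/-) omega(|T - {i}|) v(T), with sign + iff i is in T, and cut
  this sum along the partition into branches C(I,E).  If i is in I (resp. E),
  all coalitions of the branch carry the same sign, so its contribution is a
  nonnegative combination of values in [lo, hi].  If i is free in the branch,
  its coalitions pair up as S and S + {i}, and the contribution is a
  nonnegative combination of marginal gains v(S + {i}) - v(S) lying in
  [lo - hi, hi - lo].  In each case the total weight is Lambda^-, Lambda^+ or
  Lambda respectively, by the Beta-integral identity
    sum_{A subset F} (a + |A|)! (b + |F| - |A|)! = a! b! (a + b + |F| + 1)! / (a + b + 1)!.
*)

theory Submission
  imports Defs
begin

lemma sum_fact_Pow:
  assumes "finite F"
  shows "(\<Sum>A\<in>Pow F. fact (a + card A) * fact (b + card F - card A) :: real)
    = fact a * fact b * fact (a + b + card F + 1) / fact (a + b + 1)"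
  using assms
proof (induction F arbitrary: a b rule: finite_induct)
  case empty
  then show ?case by simp
next
  case (insert x F)
  let ?S = "\<lambda>a b. (\<Sum>A\<in>Pow F. fact (a + card A) * fact (b + card F - card A) :: real)"
  have card_insert: "card (insert x A) = Suc (card A)" if "A \<in> Pow F" for A
    using insert.hyps that by (metis PowD card_insert_disjoint finite_subset subsetD)
  have inj: "inj_on (insert x) (Pow F)"
    using insert.hyps unfolding inj_on_def by (metis PowD insert_ident subsetD)
  have shifted: "(\<Sum>A\<in>insert x ` Pow F. fact (a + card A) * fact (b + Suc (card F) - card A) :: real)
      = ?S (a + 1) b"
    by (subst sum.reindex[OF inj]) (auto intro!: sum.cong simp: card_insert)
  have "(\<Sum>A\<in>Pow (insert x F). fact (a + card A) * fact (b + card (insert x F) - card A) :: real)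
      = ?S a (b + 1) + ?S (a + 1) b"
    unfolding Pow_insert shifted[symmetric] using insert.hyps
    by (subst sum.union_disjoint) (auto intro!: sum.cong simp: Suc_diff_le card_mono)
  also have "\<dots> = fact a * fact (b + 1) * fact (a + b + card F + 2) / fact (a + b + 2)
      + fact (a + 1) * fact b * fact (a + b + card F + 2) / fact (a + b + 2)"
    unfolding insert.IH by (simp add: ac_simps numeral_2_eq_2)
  also have "\<dots> = (real a + real b + 2) * (fact a * fact b * fact (a + b + card F + 2))
      / ((real a + real b + 2) * fact (a + b + 1))"
  proof -
    have "fact (a + b + 2) = (real a + real b + 2) * (fact (a + b + 1) :: real)"
      "fact (a + 1) = (real a + 1) * (fact a :: real)" "fact (b + 1) = (real b + 1) * (fact b :: real)"
      by (simp_all add: numeral_2_eq_2 algebra_simps)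
    then show ?thesis
      unfolding add_divide_distrib[symmetric] by (simp add: algebra_simps del: fact_Suc)
  qed
  also have "\<dots> = fact a * fact b * fact (a + b + card F + 2) / fact (a + b + 1)"
    by (rule mult_divide_mult_cancel_left) linarith
  finally show ?case
    using insert.hyps by (simp add: numeral_2_eq_2)
qed

lemma shap_weight_eq_fact:
  assumes "k < N"
  shows "shap_weight N k = fact k * fact (N - 1 - k) / fact N"
proof -
  have "fact N = real N * fact (N - 1)"
    using assms by (simp add: fact_reduce)
  then show ?thesis
    using assms by (simp add: shap_weight_def binomial_fact)
qed

lemma shap_weight_nonneg: "0 \<le> shap_weight N k"
  by (simp add: shap_weight_def)

lemma Lam_eq_fact: "Lam I E = fact (card I) * fact (card E) / fact (card I + card E + 1)"
  by (simp add: Lam_def binomial_fact)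

lemma Lam_minus_eq_fact:
  assumes "card I \<noteq> 0"
  shows "Lam_minus I E = fact (card I - 1) * fact (card E) / fact (card I + card E)"
proof -
  have "fact (card I) = real (card I) * fact (card I - 1)"
    using assms by (simp add: fact_reduce)
  then show ?thesis
    using assms by (simp add: Lam_minus_def Lam_eq_fact)
qed

lemma Lam_plus_eq_fact:
  assumes "card E \<noteq> 0"
  shows "Lam_plus I E = fact (card I) * fact (card E - 1) / fact (card I + card E)"
proof -
  have "fact (card E) = real (card E) * fact (card E - 1)"
    using assms by (simp add: fact_reduce)
  then show ?thesis
    using assms by (simp add: Lam_plus_def Lam_eq_fact)
qed

lemma branch_eq_image_Pow:
  assumes "I \<inter> E = {}"
  shows "branch I E = (\<union>) I ` Pow (- I - E)"
proof
  show "branch I E \<subseteq> (\<union>) I ` Pow (- I - E)"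
  proof
    fix T assume "T \<in> branch I E"
    then have "T = I \<union> (T - I)" "T - I \<in> Pow (- I - E)"
      by (auto simp: branch_def)
    then show "T \<in> (\<union>) I ` Pow (- I - E)" by blast
  qed
qed (use assms in \<open>auto simp: branch_def\<close>)

lemma sum_branch_card:
  fixes I E :: "'n::finite set"
  assumes "I \<inter> E = {}"
  shows "(\<Sum>T\<in>branch I E. g (card T)) = (\<Sum>A\<in>Pow (- I - E). g (card I + card A))"
proof -
  have "inj_on ((\<union>) I) (Pow (- I - E))"
    by (auto simp: inj_on_def)
  then show ?thesis
    unfolding branch_eq_image_Pow[OF assms]
    by (subst sum.reindex) (auto intro!: sum.cong arg_cong[where f = g] card_Un_disjoint)
qed

lemma card_UNIV_disjoint_split:
  fixes I E :: "'n::finite set"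
  assumes "I \<inter> E = {}"
  shows "CARD('n) = card I + card E + card (- I - E)"
proof -
  have "CARD('n) = card (I \<union> E \<union> (- I - E))"
    by (rule arg_cong[where f = card]) blast
  also have "\<dots> = card I + card E + card (- I - E)"
    using assms by (subst card_Un_disjoint; auto simp: card_Un_disjoint)+
  finally show ?thesis .
qed

lemma sum_shap_weight_branch:
  fixes I E :: "'n::finite set"
  assumes "I \<inter> E = {}" and "E \<noteq> {}"
  shows "(\<Sum>T\<in>branch I E. shap_weight CARD('n) (card T))
    = fact (card I) * fact (card E - 1) / fact (card I + card E)"
proof -
  define F where "F = - I - E"
  have N: "CARD('n) = card I + card E + card F"
    unfolding F_def using assms(1) by (rule card_UNIV_disjoint_split)
  have E: "card E \<noteq> 0"
    using assms(2) by simp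
  have "(\<Sum>T\<in>branch I E. shap_weight CARD('n) (card T))
      = (\<Sum>A\<in>Pow F. shap_weight CARD('n) (card I + card A))"
    unfolding F_def using assms(1) by (rule sum_branch_card)
  also have "\<dots> = (\<Sum>A\<in>Pow F. fact (card I + card A) * fact (card E - 1 + card F - card A))
      / fact (card I + card E + card F)"
    unfolding sum_divide_distrib
  proof (rule sum.cong)
    fix A assume "A \<in> Pow F"
    then have "card A \<le> card F"
      by (simp add: card_mono)
    then have "card I + card A < CARD('n)"
      and "CARD('n) - 1 - (card I + card A) = card E - 1 + card F - card A"
      using E unfolding N by linarith+
    then show "shap_weight CARD('n) (card I + card A)
        = fact (card I + card A) * fact (card E - 1 + card F - card A) / fact (card I + card E + card F)"
      by (simp only: shap_weight_eq_fact N)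
  qed simp
  also have "\<dots> = fact (card I) * fact (card E - 1) / fact (card I + card E)"
  proof -
    have "card I + (card E - 1) + card F + 1 = card I + card E + card F"
      and "card I + (card E - 1) + 1 = card I + card E"
      using E by linarith+
    then show ?thesis
      unfolding sum_fact_Pow[OF finite] by (simp del: fact_Suc)
  qed
  finally show ?thesis .
qed

lemma bij_betw_insert_branch:
  assumes "i \<notin> I" and "i \<notin> E"
  shows "bij_betw (insert i) (branch I (insert i E)) (branch (insert i I) E)"
proof (rule bij_betw_imageI)
  show "inj_on (insert i) (branch I (insert i E))"
    by (auto simp: inj_on_def branch_def insert_ident)
  show "insert i ` branch I (insert i E) = branch (insert i I) E"
  proof
    show "branch (insert i I) E \<subseteq> insert i ` branch I (insert i E)"
    proof
      fix T assume "T \<in> branch (insert i I) E"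
      then have "T = insert i (T - {i})" "T - {i} \<in> branch I (insert i E)"
        using assms by (auto simp: branch_def)
      then show "T \<in> insert i ` branch I (insert i E)" by blast
    qed
  qed (use assms in \<open>auto simp: branch_def\<close>)
qed

lemma branch_split:
  "branch I E = branch (insert i I) E \<union> branch I (insert i E)"
  "branch (insert i I) E \<inter> branch I (insert i E) = {}"
  by (auto simp: branch_def)

lemma Lam_minus_eq_sum_shap_weight:
  fixes I E :: "'n::finite set"
  assumes "I \<inter> E = {}" and "i \<in> I"
  shows "Lam_minus I E = (\<Sum>T\<in>branch I E. shap_weight CARD('n) (card (T - {i})))"
proof -
  have i: "i \<notin> I - {i}" "i \<notin> E" and disj: "(I - {i}) \<inter> insert i E = {}"
    and I: "card I \<noteq> 0"
    using assms by auto
  have "bij_betw (insert i) (branch (I - {i}) (insert i E)) (branch I E)"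
    using bij_betw_insert_branch[OF i] assms(2) by (simp add: insert_absorb)
  then have "(\<Sum>T\<in>branch I E. shap_weight CARD('n) (card (T - {i})))
      = (\<Sum>S\<in>branch (I - {i}) (insert i E). shap_weight CARD('n) (card (insert i S - {i})))"
    by (rule sum.reindex_bij_betw[symmetric])
  also have "\<dots> = (\<Sum>S\<in>branch (I - {i}) (insert i E). shap_weight CARD('n) (card S))"
    by (intro sum.cong refl) (simp add: branch_def)
  also have "\<dots> = fact (card (I - {i})) * fact (card (insert i E) - 1)
      / fact (card (I - {i}) + card (insert i E))"
    using disj by (rule sum_shap_weight_branch) simp
  also have "\<dots> = fact (card I - 1) * fact (card E) / fact (card I + card E)"
  proof -
    have "Suc (card I - 1 + card E) = card I + card E"
      using I by linarith
    then show ?thesis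
      using assms(2) i(2) by (simp del: fact_Suc)
  qed
  finally show ?thesis
    by (simp add: Lam_minus_eq_fact[OF I])
qed

lemma Lam_plus_eq_sum_shap_weight:
  fixes I E :: "'n::finite set"
  assumes "I \<inter> E = {}" and "i \<in> E"
  shows "Lam_plus I E = (\<Sum>T\<in>branch I E. shap_weight CARD('n) (card T))"
proof -
  have "E \<noteq> {}" and "card E \<noteq> 0"
    using assms(2) by auto
  then show ?thesis
    by (simp add: sum_shap_weight_branch[OF assms(1)] Lam_plus_eq_fact)
qed

lemma Lam_eq_sum_shap_weight:
  fixes I E :: "'n::finite set"
  assumes "I \<inter> E = {}" and "i \<notin> I" and "i \<notin> E"
  shows "Lam I E = (\<Sum>S\<in>branch I (insert i E). shap_weight CARD('n) (card S))"
  using assms by (simp add: sum_shap_weight_branch Lam_eq_fact)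

definition shapley_part :: "('n::finite set \<Rightarrow> real) \<Rightarrow> 'n \<Rightarrow> 'n set set \<Rightarrow> real" where
  "shapley_part v i \<S> =
    (\<Sum>T\<in>\<S>. shap_weight CARD('n) (card (T - {i})) * (if i \<in> T then v T else - v T))"

lemma shapley_part_branch:
  fixes v :: "'n::finite set \<Rightarrow> real"
  assumes "i \<notin> I" and "i \<notin> E"
  shows "shapley_part v i (branch I E)
    = (\<Sum>S\<in>branch I (insert i E). shap_weight CARD('n) (card S) * (v (insert i S) - v S))"
proof -
  let ?w = "shap_weight CARD('n)"
  have not_in: "i \<notin> S" if "S \<in> branch I (insert i E)" for S
    using that by (simp add: branch_def)
  have "(\<Sum>T\<in>branch (insert i I) E. ?w (card (T - {i})) * v T)
      = (\<Sum>S\<in>branch I (insert i E). ?w (card (insert i S - {i})) * v (insert i S))"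
    by (rule sum.reindex_bij_betw[OF bij_betw_insert_branch[OF assms], symmetric])
  also have "\<dots> = (\<Sum>S\<in>branch I (insert i E). ?w (card S) * v (insert i S))"
    by (intro sum.cong refl) (simp add: not_in)
  finally have with_i: "(\<Sum>T\<in>branch (insert i I) E. ?w (card (T - {i})) * v T)
      = (\<Sum>S\<in>branch I (insert i E). ?w (card S) * v (insert i S))" .
  have "shapley_part v i (branch I E)
      = (\<Sum>T\<in>branch (insert i I) E. ?w (card (T - {i})) * v T)
      - (\<Sum>S\<in>branch I (insert i E). ?w (card S) * v S)"
    unfolding shapley_part_def branch_split(1)[of I E i] using branch_split(2)[of i I E]
    by (subst sum.union_disjoint) (auto simp: sum_negf branch_def intro!: sum.cong)
  then show ?thesis
    unfolding with_i by (simp add: sum_subtractf right_diff_distrib)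
qed

lemma shapley_eq_shapley_part:
  fixes v :: "'n::finite set \<Rightarrow> real"
  shows "shapley v i = shapley_part v i UNIV"
proof -
  have "shapley_part v i UNIV = shapley_part v i (branch {} {})"
    by (simp add: branch_def)
  also have "\<dots> = (\<Sum>S\<in>branch {} {i}. shap_weight CARD('n) (card S) * (v (insert i S) - v S))"
    by (simp add: shapley_part_branch)
  also have "branch {} {i} = {S. S \<subseteq> UNIV - {i}}"
    by (auto simp: branch_def)
  finally show ?thesis
    by (simp add: shapley_def)
qed

lemma sum_partition_UNIV:
  fixes C :: "'b \<Rightarrow> 'a::finite set"
  assumes "finite P" and "\<forall>x. \<exists>!p\<in>P. x \<in> C p"
  shows "sum g UNIV = (\<Sum>p\<in>P. sum g (C p))"
proof -
  have cover: "UNIV = (\<Union>p\<in>P. C p)"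
    using assms(2) by blast
  have "\<forall>p\<in>P. \<forall>q\<in>P. p \<noteq> q \<longrightarrow> C p \<inter> C q = {}"
    using assms(2) by blast
  then show ?thesis
    using assms(1) by (subst cover) (simp add: sum.UNION_disjoint)
qed

lemma shapley_part_partition:
  fixes B :: "('n::finite set \<times> 'n set) set"
  assumes "\<forall>S. \<exists>!p\<in>B. S \<in> branch (fst p) (snd p)"
  shows "shapley_part v i UNIV = (\<Sum>p\<in>B. shapley_part v i (branch (fst p) (snd p)))"
  unfolding shapley_part_def using assms by (intro sum_partition_UNIV) simp_all

lemma sum_weighted_bounds:
  fixes w g :: "'a \<Rightarrow> real"
  assumes "\<forall>a\<in>A. 0 \<le> w a" and "\<forall>a\<in>A. l \<le> g a \<and> g a \<le> u"
  shows "sum w A * l \<le> (\<Sum>a\<in>A. w a * g a) \<and> (\<Sum>a\<in>A. w a * g a) \<le> sum w A * u"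
  unfolding sum_distrib_right using assms
  by (auto intro!: sum_mono mult_left_mono)

lemma shapley_part_bounds_included:
  fixes v :: "'n::finite set \<Rightarrow> real"
  assumes "I \<inter> E = {}" and "i \<in> I" and "\<forall>S\<in>branch I E. lo \<le> v S \<and> v S \<le> hi"
  shows "Lam_minus I E * lo \<le> shapley_part v i (branch I E)
    \<and> shapley_part v i (branch I E) \<le> Lam_minus I E * hi"
proof -
  have "shapley_part v i (branch I E) = (\<Sum>T\<in>branch I E. shap_weight CARD('n) (card (T - {i})) * v T)"
    using assms(2) by (auto simp: shapley_part_def branch_def intro!: sum.cong)
  then show ?thesis
    using sum_weighted_bounds[OF _ assms(3)] assms(1,2)
    by (simp add: Lam_minus_eq_sum_shap_weight shap_weight_nonneg)
qed

lemma shapley_part_bounds_excluded: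
  fixes v :: "'n::finite set \<Rightarrow> real"
  assumes "I \<inter> E = {}" and "i \<in> E" and "\<forall>S\<in>branch I E. lo \<le> v S \<and> v S \<le> hi"
  shows "- (Lam_plus I E * hi) \<le> shapley_part v i (branch I E)
    \<and> shapley_part v i (branch I E) \<le> - (Lam_plus I E * lo)"
proof -
  have "shapley_part v i (branch I E) = - (\<Sum>T\<in>branch I E. shap_weight CARD('n) (card T) * v T)"
    unfolding shapley_part_def sum_negf[symmetric] using assms(2)
    by (intro sum.cong refl) (auto simp: branch_def)
  then show ?thesis
    using sum_weighted_bounds[OF _ assms(3)] assms(1,2)
    by (simp add: Lam_plus_eq_sum_shap_weight shap_weight_nonneg)
qed

lemma shapley_part_bounds_free:
  fixes v :: "'n::finite set \<Rightarrow> real"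
  assumes "I \<inter> E = {}" and "i \<notin> I" and "i \<notin> E"
    and "\<forall>S\<in>branch I E. lo \<le> v S \<and> v S \<le> hi"
  shows "Lam I E * (lo - hi) \<le> shapley_part v i (branch I E)
    \<and> shapley_part v i (branch I E) \<le> Lam I E * (hi - lo)"
proof -
  have "lo - hi \<le> v (insert i S) - v S \<and> v (insert i S) - v S \<le> hi - lo"
    if "S \<in> branch I (insert i E)" for S
  proof -
    have "S \<in> branch I E" and "insert i S \<in> branch I E"
      using that assms(3) by (auto simp: branch_def)
    then have "lo \<le> v S" "v S \<le> hi" "lo \<le> v (insert i S)" "v (insert i S) \<le> hi"
      using assms(4) by auto
    then show ?thesis
      by linarith
  qed
  then have "(\<Sum>S\<in>branch I (insert i E). shap_weight CARD('n) (card S)) * (lo - hi)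
      \<le> (\<Sum>S\<in>branch I (insert i E). shap_weight CARD('n) (card S) * (v (insert i S) - v S))
    \<and> (\<Sum>S\<in>branch I (insert i E). shap_weight CARD('n) (card S) * (v (insert i S) - v S))
      \<le> (\<Sum>S\<in>branch I (insert i E). shap_weight CARD('n) (card S)) * (hi - lo)"
    by (intro sum_weighted_bounds) (simp_all add: shap_weight_nonneg)
  then show ?thesis
    using assms(1-3) by (simp add: shapley_part_branch Lam_eq_sum_shap_weight)
qed

lemma sum_bounds:
  fixes l g u :: "'a \<Rightarrow> real"
  assumes "\<forall>a\<in>A. l a \<le> g a \<and> g a \<le> u a"
  shows "sum l A \<le> sum g A \<and> sum g A \<le> sum u A"
  using assms by (auto intro!: sum_mono)

theorem mainTheorem7:
  fixes f :: "real^'n::finite \<Rightarrow> real" and x :: "real^'n" and D :: "(real^'n) measure"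
    and B :: "('n set \<times> 'n set) set"
    and lo hi :: "'n set \<times> 'n set \<Rightarrow> real"
    and i :: 'n
  assumes "prob_space D" and "sets D = sets borel"
    and disj: "\<forall>(I, E) \<in> B. I \<inter> E = {}"
    and part: "\<forall>S :: 'n set. \<exists>!p \<in> B. S \<in> branch (fst p) (snd p)"
    and lohi: "\<forall>p \<in> B. lo p \<le> hi p"
    and bounds: "\<forall>p \<in> B. \<forall>S \<in> branch (fst p) (snd p).
                   lo p \<le> game_val f x D S \<and> game_val f x D S \<le> hi p"
  shows
   "(\<Sum>(I, E) \<in> {(I, E) \<in> B. i \<in> I}. Lam_minus I E * lo (I, E))
    + (\<Sum>(I, E) \<in> {(I, E) \<in> B. i \<notin> I \<and> i \<notin> E}. Lam I E * (lo (I, E) - hi (I, E)))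
    - (\<Sum>(I, E) \<in> {(I, E) \<in> B. i \<in> E}. Lam_plus I E * hi (I, E))
    \<le> shapley (game_val f x D) i
   \<and> shapley (game_val f x D) i \<le>
     (\<Sum>(I, E) \<in> {(I, E) \<in> B. i \<in> I}. Lam_minus I E * hi (I, E))
    + (\<Sum>(I, E) \<in> {(I, E) \<in> B. i \<notin> I \<and> i \<notin> E}. Lam I E * (hi (I, E) - lo (I, E)))
    - (\<Sum>(I, E) \<in> {(I, E) \<in> B. i \<in> E}. Lam_plus I E * lo (I, E))"
proof -
  define c where "c p = shapley_part (game_val f x D) i (branch (fst p) (snd p))" for p
  let ?Bin = "{(I, E) \<in> B. i \<in> I}" and ?Bfree = "{(I, E) \<in> B. i \<notin> I \<and> i \<notin> E}"
    and ?Bex = "{(I, E) \<in> B. i \<in> E}"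
  have "shapley (game_val f x D) i = sum c B"
    unfolding c_def shapley_eq_shapley_part using part by (rule shapley_part_partition)
  also have "B = ?Bin \<union> ?Bfree \<union> ?Bex"
    by auto
  also have "sum c (?Bin \<union> ?Bfree \<union> ?Bex) = sum c ?Bin + sum c ?Bfree + sum c ?Bex"
    using disj by (subst sum.union_disjoint; auto)+
  finally have split: "shapley (game_val f x D) i = sum c ?Bin + sum c ?Bfree + sum c ?Bex" .
  have branch_hyps: "I \<inter> E = {}"
      "\<forall>S\<in>branch I E. lo (I, E) \<le> game_val f x D S \<and> game_val f x D S \<le> hi (I, E)"
    if "(I, E) \<in> B" for I E
    using that disj bounds by fastforce+
  have "(\<Sum>(I, E) \<in> ?Bin. Lam_minus I E * lo (I, E)) \<le> sum c ?Bin
      \<and> sum c ?Bin \<le> (\<Sum>(I, E) \<in> ?Bin. Lam_minus I E * hi (I, E))"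
    by (intro sum_bounds ballI, clarsimp simp: c_def, rule shapley_part_bounds_included) (use branch_hyps in auto)
  moreover have "(\<Sum>(I, E) \<in> ?Bfree. Lam I E * (lo (I, E) - hi (I, E))) \<le> sum c ?Bfree
      \<and> sum c ?Bfree \<le> (\<Sum>(I, E) \<in> ?Bfree. Lam I E * (hi (I, E) - lo (I, E)))"
    by (intro sum_bounds ballI, clarsimp simp: c_def, rule shapley_part_bounds_free) (use branch_hyps in auto)
  moreover have "(\<Sum>(I, E) \<in> ?Bex. - (Lam_plus I E * hi (I, E))) \<le> sum c ?Bex
      \<and> sum c ?Bex \<le> (\<Sum>(I, E) \<in> ?Bex. - (Lam_plus I E * lo (I, E)))"
    by (intro sum_bounds ballI, clarsimp simp: c_def, rule shapley_part_bounds_excluded) (use branch_hyps in auto)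
  ultimately show ?thesis
    unfolding split by (simp add: case_prod_unfold sum_negf)
qed

end
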